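(* Let $X \subset \mathbb{R}^{2n}$ be a centrally symmetric (about the origin) strictly convex body with $C^2$-smooth boundary, and let $T$ be its symplectic outer billiard map. Suppose that for every $x\in\partial X$ there exists a point $z\in\mathbb{R}^{2n}\setminus X$ with $T^4z=z$, $T^2z=-z$ (so the orbit $\{z,Tz,T^2z,T^3z\}$ is a centrally symmetric $4$-periodic orbit) and $x=(z+Tz)/2$. Then $X=\alpha X^\omega$ for some $\alpha>0$; consequently $\alpha^{-1/2}X$ is symplectically self-polar.
   Context: $\mathbb{R}^{2n}\cong\mathbb{C}^n$, $J$ is multiplication by $\sqrt{-1}$, $\omega(u,v)=\langle Ju,v\rangle$. For a convex body $X$ with origin in its interior, $X^\omega=\{y: \omega(x,y)\le 1\ \forall x\in X\}$; $X$ is symplectically self-polar if $X=X^\omega$. The characteristic line of $\partial X$ at $x$ is $\ker(\omega|_{T_x\partial X})$. Symplectic outer billiard map: for a strictly convex body $X$ with $C^1$ boundary and $z\in\mathbb{R}^{2n}\setminus X$, there is a unique $x\in\partial X$ such that the line through $z$ and $x$ is the characteristic line of $\partial X$ at $x$ and $\omega(x,x-z)>0$; then $T(z)=2x-z$. *)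

theory Defs
  imports "HOL-Analysis.Analysis"
begin

text \<open>We model R^{2n} as C^n = complex ^ 'n (real inner product
  x \<bullet> y = sum_i Re (x_i * cnj y_i)); J is multiplication by i.\<close>

definition cJ :: "complex ^ 'n \<Rightarrow> complex ^ 'n" where
  "cJ u = (\<chi> i. \<i> * u $ i)"

definition omega :: "complex ^ 'n \<Rightarrow> complex ^ 'n \<Rightarrow> real" where
  "omega u v = cJ u \<bullet> v"

definition symp_polar :: "(complex ^ 'n) set \<Rightarrow> (complex ^ 'n) set" where
  "symp_polar X = {y. \<forall>x\<in>X. omega x y \<le> 1}"

definition symp_self_polar :: "(complex ^ 'n) set \<Rightarrow> bool" where
  "symp_self_polar X \<longleftrightarrow> X = symp_polar X"

definition convex_body :: "'a::euclidean_space set \<Rightarrow> bool" where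
  "convex_body X \<longleftrightarrow> compact X \<and> convex X \<and> interior X \<noteq> {}"

definition strictly_convex :: "'a::euclidean_space set \<Rightarrow> bool" where
  "strictly_convex X \<longleftrightarrow>
     (\<forall>x\<in>X. \<forall>y\<in>X. x \<noteq> y \<longrightarrow> (\<forall>t::real. 0 < t \<and> t < 1 \<longrightarrow> (1 - t) *\<^sub>R x + t *\<^sub>R y \<in> interior X))"

definition centrally_symmetric :: "'a::real_vector set \<Rightarrow> bool" where
  "centrally_symmetric X \<longleftrightarrow> (\<forall>x\<in>X. - x \<in> X)"

text \<open>C^2-smooth boundary: near each boundary point p, X is the sublevel set
  {f \<le> 0} of a C^2 function f with nonvanishing gradient at p.
  g is the gradient of f, g' the derivative of g.\<close>
definition C2_boundary :: "'a::euclidean_space set \<Rightarrow> bool" where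
  "C2_boundary X \<longleftrightarrow>
     (\<forall>p\<in>frontier X. \<exists>U (f::'a \<Rightarrow> real) (g::'a \<Rightarrow> 'a) (g'::'a \<Rightarrow> 'a \<Rightarrow> 'a).
        open U \<and> p \<in> U \<and>
        (\<forall>x\<in>U. (f has_derivative (\<lambda>h. g x \<bullet> h)) (at x)) \<and>
        (\<forall>x\<in>U. (g has_derivative g' x) (at x)) \<and>
        (\<forall>h. continuous_on U (\<lambda>x. g' x h)) \<and>
        g p \<noteq> 0 \<and>
        X \<inter> U = {x\<in>U. f x \<le> 0})"

definition tangent_space :: "'a::real_normed_vector set \<Rightarrow> 'a \<Rightarrow> 'a set" where
  "tangent_space S x = {v. \<exists>(\<gamma>::real \<Rightarrow> 'a) e. e > 0 \<and> \<gamma> 0 = x \<and>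
       (\<forall>t. \<bar>t\<bar> < e \<longrightarrow> \<gamma> t \<in> S) \<and> (\<gamma> has_vector_derivative v) (at 0)}"

definition char_dirs :: "(complex ^ 'n) set \<Rightarrow> complex ^ 'n \<Rightarrow> (complex ^ 'n) set" where
  "char_dirs X x = {u \<in> tangent_space (frontier X) x.
      \<forall>v \<in> tangent_space (frontier X) x. omega u v = 0}"

definition char_line :: "(complex ^ 'n) set \<Rightarrow> complex ^ 'n \<Rightarrow> (complex ^ 'n) set" where
  "char_line X x = {x + u | u. u \<in> char_dirs X x}"

definition ob_point :: "(complex ^ 'n) set \<Rightarrow> complex ^ 'n \<Rightarrow> complex ^ 'n" where
  "ob_point X z = (THE x. x \<in> frontier X \<and> z \<noteq> x \<and>
       {x + t *\<^sub>R (z - x) | t. True} = char_line X x \<and> omega x (x - z) > 0)"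

definition outer_billiard :: "(complex ^ 'n) set \<Rightarrow> complex ^ 'n \<Rightarrow> complex ^ 'n" where
  "outer_billiard X z = 2 *\<^sub>R ob_point X z - z"

end

theory Submission
  imports Defs
begin

text \<open>
  For \<open>x \<noteq> 0\<close> let \<open>S x\<close> be the point of \<open>X\<close> maximising \<open>\<omega>(x, \<cdot>)\<close> (unique by strict
  convexity) and \<open>h x = \<omega>(x, S x)\<close>. The outer billiard reflects \<open>z\<close> in the point \<open>x\<close> of \<open>X\<close>
  maximising \<open>\<omega>(z - x, \<cdot>)\<close>; such a point exists by Brouwer's fixed point theorem and is unique by
  the antisymmetry of \<open>\<omega>\<close>. For a centrally symmetric 4-periodic orbit with midpoint \<open>x\<close>, the
  relation \<open>T\<^sup>2 z = - z\<close> puts the second reflection point at \<open>x - z = S x\<close>, and the first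
  reflection says that \<open>x\<close> in turn maximises \<open>\<omega>(\<cdot>, S x)\<close>. This reciprocity gives
  \<open>\<bar>h a - h b\<bar> \<le> \<parallel>a - b\<parallel> \<parallel>S a - S b\<parallel>\<close> on the boundary, so \<open>h\<close> has zero derivative along
  boundary curves and is a constant \<open>\<alpha>\<close>. Then \<open>X \<subseteq> \<alpha> X\<^sup>\<omega>\<close> by homogeneity, and the reverse
  inclusion follows by testing against \<open>- S x \<in> X\<close>, using central symmetry.
\<close>

section \<open>The symplectic form\<close>

lemma cJ_add: "cJ (u + v) = cJ u + cJ v"
  by (simp add: cJ_def vec_eq_iff algebra_simps)

lemma cJ_scaleR: "cJ (c *\<^sub>R u) = c *\<^sub>R cJ u"
  by (simp add: cJ_def vec_eq_iff scaleR_conv_of_real algebra_simps)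

lemma cJ_minus: "cJ (- u) = - cJ u"
  by (simp add: cJ_def vec_eq_iff)

lemma cJ_diff: "cJ (u - v) = cJ u - cJ v"
  by (simp add: cJ_def vec_eq_iff algebra_simps)

lemma cJ_cJ: "cJ (cJ u) = - u"
  by (simp add: cJ_def vec_eq_iff)

lemma inner_cJ_left: "cJ u \<bullet> v = - (u \<bullet> cJ v)"
  by (simp add: cJ_def inner_vec_def inner_complex_def sum_negf[symmetric] algebra_simps)

lemma inner_cJ_self: "cJ u \<bullet> u = 0"
  by (simp add: cJ_def inner_vec_def inner_complex_def algebra_simps)

lemma inner_cJ_cJ: "cJ u \<bullet> cJ v = u \<bullet> v"
  by (simp add: inner_cJ_left cJ_cJ)

lemma norm_cJ: "norm (cJ u) = norm u"
  by (simp add: norm_eq_sqrt_inner inner_cJ_cJ)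

lemma cJ_eq_0_iff: "cJ u = 0 \<longleftrightarrow> u = 0"
  by (metis norm_cJ norm_eq_zero)

lemma bounded_linear_cJ: "bounded_linear cJ"
  by (intro linear_conv_bounded_linear[THEN iffD1] linearI) (simp_all add: cJ_add cJ_scaleR)

lemma omega_antisym: "omega x y = - omega y x"
  unfolding omega_def by (metis inner_cJ_left inner_commute)

lemma omega_self: "omega x x = 0"
  by (simp add: omega_def inner_cJ_self)

lemma omega_diff_left: "omega (a - b) c = omega a c - omega b c"
  by (simp add: omega_def cJ_diff inner_diff_left)

lemma omega_diff_right: "omega c (a - b) = omega c a - omega c b"
  by (simp add: omega_def inner_diff_right)

lemma omega_scaleR_left: "omega (r *\<^sub>R a) c = r * omega a c"
  by (simp add: omega_def cJ_scaleR)

lemma omega_scaleR_right: "omega c (r *\<^sub>R a) = r * omega c a"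
  by (simp add: omega_def)

lemma omega_minus_left: "omega (- a) c = - omega a c"
  by (simp add: omega_def cJ_minus)

lemma omega_zero_left: "omega 0 y = 0"
  using omega_scaleR_left[of 0] by simp

lemma abs_omega_le: "\<bar>omega x y\<bar> \<le> norm x * norm y"
  unfolding omega_def using Cauchy_Schwarz_ineq2[of "cJ x" y] by (simp add: norm_cJ)

lemma symp_polar_scaleR:
  assumes "c > 0"
  shows "symp_polar ((\<lambda>y. c *\<^sub>R y) ` X) = (\<lambda>y. (1/c) *\<^sub>R y) ` symp_polar X"
proof (intro equalityI subsetI)
  fix y assume "y \<in> symp_polar ((\<lambda>y. c *\<^sub>R y) ` X)"
  then have "c *\<^sub>R y \<in> symp_polar X"
    by (simp add: symp_polar_def omega_scaleR_left omega_scaleR_right)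
  moreover have "y = (1/c) *\<^sub>R (c *\<^sub>R y)"
    using assms by simp
  ultimately show "y \<in> (\<lambda>y. (1/c) *\<^sub>R y) ` symp_polar X"
    by blast
next
  fix y assume "y \<in> (\<lambda>y. (1/c) *\<^sub>R y) ` symp_polar X"
  then obtain w where "w \<in> symp_polar X" "y = (1/c) *\<^sub>R w"
    by blast
  then show "y \<in> symp_polar ((\<lambda>y. c *\<^sub>R y) ` X)"
    using assms by (simp add: symp_polar_def omega_scaleR_left omega_scaleR_right)
qed

lemma symp_self_polar_rescaled:
  fixes X :: "(complex ^ 'n) set"
  assumes "\<alpha> > 0" and "X = (\<lambda>y. \<alpha> *\<^sub>R y) ` symp_polar X"
  shows "symp_self_polar ((\<lambda>y. (1 / sqrt \<alpha>) *\<^sub>R y) ` X)"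
proof -
  have "(\<lambda>y. (1/\<alpha>) *\<^sub>R y) ` X = (\<lambda>y. ((1/\<alpha>) * \<alpha>) *\<^sub>R y) ` symp_polar X"
    by (subst assms(2)) (simp add: image_image)
  then have "symp_polar X = (\<lambda>y. (1/\<alpha>) *\<^sub>R y) ` X"
    using assms(1) by simp
  then have "symp_polar ((\<lambda>y. (1 / sqrt \<alpha>) *\<^sub>R y) ` X) = (\<lambda>y. (sqrt \<alpha> / \<alpha>) *\<^sub>R y) ` X"
    using assms(1) by (simp add: symp_polar_scaleR image_image)
  moreover have "sqrt \<alpha> / \<alpha> = 1 / sqrt \<alpha>"
    using assms(1) real_div_sqrt[of \<alpha>] by (simp add: field_simps)
  ultimately show ?thesis
    unfolding symp_self_polar_def by simp
qed

section \<open>Gauge and support points of a convex body\<close>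

lemma norm_divide_scaleR_diff_le:
  fixes a b :: "'a::real_normed_vector"
  assumes m: "m > 0" "ma \<ge> m" "mb \<ge> m" and K: "K \<ge> 0" "\<bar>ma - mb\<bar> \<le> K * norm (a - b)"
    and M: "norm b \<le> M"
  shows "norm ((1/ma) *\<^sub>R a - (1/mb) *\<^sub>R b) \<le> (1/m + M * K / (m*m)) * norm (a - b)"
proof -
  have ma: "ma > 0" and mb: "mb > 0"
    using m by auto
  have "(1/ma) *\<^sub>R a - (1/mb) *\<^sub>R b = (1/ma) *\<^sub>R (a - b) + (1/ma - 1/mb) *\<^sub>R b"
    by (simp add: algebra_simps)
  then have "norm ((1/ma) *\<^sub>R a - (1/mb) *\<^sub>R b) \<le> (1/ma) * norm (a - b) + \<bar>1/ma - 1/mb\<bar> * norm b"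
    using norm_triangle_ineq[of "(1/ma) *\<^sub>R (a - b)" "(1/ma - 1/mb) *\<^sub>R b"] ma by simp
  also have "(1/ma) * norm (a - b) \<le> (1/m) * norm (a - b)"
    using m ma by (intro mult_right_mono) (auto simp: field_simps)
  also have "\<bar>1/ma - 1/mb\<bar> = \<bar>ma - mb\<bar> / (ma * mb)"
    using ma mb by (simp add: field_simps abs_minus_commute)
  also have "\<bar>ma - mb\<bar> / (ma * mb) * norm b \<le> (K * norm (a - b)) / (m * m) * M"
  proof (rule mult_mono)
    show "\<bar>ma - mb\<bar> / (ma * mb) \<le> (K * norm (a - b)) / (m * m)"
      using K m by (intro frac_le mult_mono) auto
  qed (use M K m in auto)
  finally show ?thesis
    by (simp add: field_simps)
qed

locale origin_convex_body =
  fixes X :: "'a::euclidean_space set"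
  assumes compact: "compact X" and convex: "convex X" and zero_interior: "0 \<in> interior X"
begin

lemma closed: "closed X"
  using compact compact_imp_closed by blast

lemma zero_mem: "0 \<in> X"
  using zero_interior interior_subset by blast

lemma frontier_subset: "frontier X \<subseteq> X"
  using closed by (simp add: frontier_subset_closed)

definition inradius :: real where
  "inradius = (SOME r. r > 0 \<and> cball 0 r \<subseteq> X)"

definition outradius :: real where
  "outradius = (SOME r. r > 0 \<and> X \<subseteq> cball 0 r)"

lemma inradius: "inradius > 0" "cball 0 inradius \<subseteq> X"
proof -
  obtain e where "e > 0" "ball 0 e \<subseteq> X"
    using zero_interior by (meson mem_interior)
  then have "e/2 > 0 \<and> cball 0 (e/2) \<subseteq> X"
    by (auto simp: subset_iff)
  then show "inradius > 0" "cball 0 inradius \<subseteq> X"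
    unfolding inradius_def by (metis (mono_tags, lifting) someI)+
qed

lemma outradius: "outradius > 0" "X \<subseteq> cball 0 outradius"
proof -
  obtain b where "b > 0" "\<forall>x\<in>X. norm x \<le> b"
    using compact_imp_bounded[OF compact] unfolding bounded_pos by blast
  then have "b > 0 \<and> X \<subseteq> cball 0 b"
    by (auto simp: subset_iff)
  then show "outradius > 0" "X \<subseteq> cball 0 outradius"
    unfolding outradius_def by (metis (mono_tags, lifting) someI)+
qed

lemma mem_if_norm_le_inradius: "norm y \<le> inradius \<Longrightarrow> y \<in> X"
  using inradius by auto

lemma norm_le_outradius: "x \<in> X \<Longrightarrow> norm x \<le> outradius"
  using outradius by auto

text \<open>The gauge (Minkowski functional) of \<open>X\<close>, written as the support function of the
  ordinary polar body; this makes it a supremum of linear functionals, hence Lipschitz.\<close>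

definition polar :: "'a set" where
  "polar = {q. \<forall>x\<in>X. q \<bullet> x \<le> 1}"

definition gauge_fn :: "'a \<Rightarrow> real" where
  "gauge_fn y = (SUP q\<in>polar. q \<bullet> y)"

lemma zero_polar: "0 \<in> polar"
  by (simp add: polar_def)

lemma inner_polar_le: "q \<in> polar \<Longrightarrow> q \<bullet> y \<le> norm y / inradius"
proof -
  assume q: "q \<in> polar"
  have "norm q * inradius \<le> 1"
  proof (cases "q = 0")
    case False
    have "(inradius / norm q) *\<^sub>R q \<in> X"
      using inradius False by (intro mem_if_norm_le_inradius) simp
    then have "q \<bullet> ((inradius / norm q) *\<^sub>R q) \<le> 1"
      using q unfolding polar_def by blast
    then show ?thesis
      using False by (simp add: power2_norm_eq_inner[symmetric] power2_eq_square mult.commute)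
  qed (use inradius in auto)
  then have "norm q \<le> 1 / inradius"
    using inradius(1) by (simp add: field_simps)
  then have "norm q * norm y \<le> (1 / inradius) * norm y"
    by (rule mult_right_mono) simp
  then show ?thesis
    using norm_cauchy_schwarz[of q y] by simp
qed

lemma bdd_above_polar: "bdd_above ((\<lambda>q. q \<bullet> y) ` polar)"
  using inner_polar_le by (auto intro!: bdd_aboveI2)

lemma inner_polar_le_gauge_fn: "q \<in> polar \<Longrightarrow> q \<bullet> y \<le> gauge_fn y"
  unfolding gauge_fn_def by (rule cSUP_upper[OF _ bdd_above_polar])

lemma gauge_fn_le: "(\<And>q. q \<in> polar \<Longrightarrow> q \<bullet> y \<le> c) \<Longrightarrow> gauge_fn y \<le> c"
  unfolding gauge_fn_def using zero_polar by (intro cSUP_least) auto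

lemma gauge_fn_nonneg: "gauge_fn y \<ge> 0"
  using inner_polar_le_gauge_fn[OF zero_polar, of y] by simp

lemma gauge_fn_le_add: "gauge_fn a \<le> gauge_fn b + norm (a - b) / inradius"
proof (rule gauge_fn_le)
  fix q assume q: "q \<in> polar"
  have "q \<bullet> a = q \<bullet> b + q \<bullet> (a - b)"
    by (simp add: inner_diff_right)
  also have "\<dots> \<le> gauge_fn b + norm (a - b) / inradius"
    using inner_polar_le_gauge_fn[OF q] inner_polar_le[OF q] by (rule add_mono)
  finally show "q \<bullet> a \<le> gauge_fn b + norm (a - b) / inradius" .
qed

lemma gauge_fn_lipschitz: "\<bar>gauge_fn a - gauge_fn b\<bar> \<le> norm (a - b) / inradius"
  using gauge_fn_le_add[of a b] gauge_fn_le_add[of b a] by (simp add: norm_minus_commute)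

lemma gauge_fn_zero [simp]: "gauge_fn 0 = 0"
  using gauge_fn_le[of 0 0] gauge_fn_nonneg[of 0] by simp

lemma gauge_fn_scaleR:
  assumes "c \<ge> 0"
  shows "gauge_fn (c *\<^sub>R y) = c * gauge_fn y"
proof (cases "c = 0")
  case False
  with assms have c: "c > 0" by simp
  have "gauge_fn (c *\<^sub>R y) \<le> c * gauge_fn y"
    by (rule gauge_fn_le) (use c inner_polar_le_gauge_fn in auto)
  moreover have "gauge_fn y \<le> gauge_fn (c *\<^sub>R y) / c"
  proof (rule gauge_fn_le)
    fix q assume "q \<in> polar"
    from inner_polar_le_gauge_fn[OF this, of "c *\<^sub>R y"]
    show "q \<bullet> y \<le> gauge_fn (c *\<^sub>R y) / c"
      using c by (simp add: field_simps)
  qed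
  ultimately show ?thesis
    using c by (simp add: field_simps)
qed simp

lemma norm_div_outradius_le_gauge_fn: "norm y / outradius \<le> gauge_fn y"
proof (cases "y = 0")
  case False
  let ?q = "(1 / (outradius * norm y)) *\<^sub>R y"
  have "?q \<in> polar"
    unfolding polar_def
  proof safe
    fix x assume "x \<in> X"
    have "?q \<bullet> x \<le> norm ?q * norm x"
      by (rule norm_cauchy_schwarz)
    also have "\<dots> = norm x / outradius"
      using False outradius(1) by simp
    also have "\<dots> \<le> 1"
      using norm_le_outradius[OF \<open>x \<in> X\<close>] outradius(1) by simp
    finally show "?q \<bullet> x \<le> 1" .
  qed
  from inner_polar_le_gauge_fn[OF this, of y] show ?thesis
    using False outradius(1) by (simp add: power2_norm_eq_inner[symmetric] power2_eq_square)
qed simp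

lemma gauge_fn_pos:
  assumes "y \<noteq> 0"
  shows "gauge_fn y > 0"
proof -
  have "norm y / outradius > 0"
    using assms outradius(1) by simp
  then show ?thesis
    using norm_div_outradius_le_gauge_fn[of y] by linarith
qed

lemma mem_iff_gauge_fn_le_1: "y \<in> X \<longleftrightarrow> gauge_fn y \<le> 1"
proof
  assume "y \<in> X"
  then show "gauge_fn y \<le> 1"
    by (intro gauge_fn_le) (auto simp: polar_def)
next
  assume m: "gauge_fn y \<le> 1"
  show "y \<in> X"
  proof (rule ccontr)
    assume "y \<notin> X"
    then obtain a b where ab: "a \<bullet> y < b" "\<forall>x\<in>X. a \<bullet> x > b"
      using separating_hyperplane_closed_point[OF convex closed] by blast
    have b: "b < 0"
      using ab(2) zero_mem by force
    have "(1 / (-b)) *\<^sub>R (- a) \<in> polar"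
      unfolding polar_def using ab(2) b by (auto simp: field_simps)
    from inner_polar_le_gauge_fn[OF this, of y] have "(1 / (-b)) *\<^sub>R (- a) \<bullet> y \<le> 1"
      using m by simp
    then show False
      using ab(1) b by (simp add: field_simps)
  qed
qed

lemma interior_iff_gauge_fn_less_1: "y \<in> interior X \<longleftrightarrow> gauge_fn y < 1"
proof
  assume y: "y \<in> interior X"
  show "gauge_fn y < 1"
  proof (cases "y = 0")
    case False
    obtain e where e: "e > 0" "ball y e \<subseteq> X"
      using y by (meson mem_interior)
    define c where "c = 1 + e / (2 * norm y)"
    have "dist y (c *\<^sub>R y) < e"
      using e(1) False by (simp add: c_def dist_norm algebra_simps)
    then have "c *\<^sub>R y \<in> X"
      using e(2) by auto
    moreover have c: "c > 1"
      using e(1) False by (simp add: c_def)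
    ultimately have "c * gauge_fn y \<le> 1"
      using gauge_fn_scaleR[of c y] mem_iff_gauge_fn_le_1 by simp
    moreover have "gauge_fn y < c * gauge_fn y"
      using c gauge_fn_pos[OF False] by simp
    ultimately show ?thesis
      by linarith
  qed simp
next
  assume m: "gauge_fn y < 1"
  have "ball y ((1 - gauge_fn y) * inradius) \<subseteq> X"
  proof
    fix x assume "x \<in> ball y ((1 - gauge_fn y) * inradius)"
    then have "norm (x - y) / inradius < 1 - gauge_fn y"
      using inradius(1) by (simp add: dist_norm norm_minus_commute field_simps)
    then show "x \<in> X"
      using gauge_fn_le_add[of x y] mem_iff_gauge_fn_le_1 by simp
  qed
  moreover have "(1 - gauge_fn y) * inradius > 0"
    using m inradius(1) by simp
  ultimately show "y \<in> interior X"
    by (meson centre_in_ball interior_maximal open_ball subsetD)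
qed

lemma frontier_iff_gauge_fn_eq_1: "y \<in> frontier X \<longleftrightarrow> gauge_fn y = 1"
proof -
  have "y \<in> frontier X \<longleftrightarrow> y \<in> X \<and> y \<notin> interior X"
    using closed by (simp add: frontier_def closure_closed)
  then show ?thesis
    unfolding mem_iff_gauge_fn_le_1 interior_iff_gauge_fn_less_1 by linarith
qed

lemma frontier_nonzero: "y \<in> frontier X \<Longrightarrow> y \<noteq> 0"
  using frontier_iff_gauge_fn_eq_1 by auto

definition radial_proj :: "'a \<Rightarrow> 'a" where
  "radial_proj y = (1 / gauge_fn y) *\<^sub>R y"

lemma radial_proj_frontier: "y \<noteq> 0 \<Longrightarrow> radial_proj y \<in> frontier X"
  using frontier_iff_gauge_fn_eq_1 gauge_fn_scaleR[of "1 / gauge_fn y" y] gauge_fn_pos[of y]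
  by (simp add: radial_proj_def)

lemma radial_proj_eq_self: "y \<in> frontier X \<Longrightarrow> radial_proj y = y"
  using frontier_iff_gauge_fn_eq_1 by (simp add: radial_proj_def)

lemma supporting_inner_pos:
  assumes "q \<noteq> 0" and "\<forall>y\<in>X. q \<bullet> y \<le> q \<bullet> p"
  shows "q \<bullet> p > 0"
proof -
  have "(inradius / norm q) *\<^sub>R q \<in> X"
    using inradius assms(1) by (intro mem_if_norm_le_inradius) simp
  then have "inradius * norm q \<le> q \<bullet> p"
    using assms by (auto simp: power2_norm_eq_inner[symmetric] power2_eq_square)
  moreover have "inradius * norm q > 0"
    using inradius(1) assms(1) by simp
  ultimately show ?thesis
    by linarith
qed


lemma gauge_fn_ge_if_supporting:
  assumes "\<forall>x\<in>X. \<nu> \<bullet> x \<le> \<nu> \<bullet> p" and "\<nu> \<bullet> p > 0"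
  shows "\<nu> \<bullet> y / (\<nu> \<bullet> p) \<le> gauge_fn y"
proof -
  have "(1 / (\<nu> \<bullet> p)) *\<^sub>R \<nu> \<in> polar"
    using assms by (auto simp: polar_def field_simps)
  from inner_polar_le_gauge_fn[OF this] show ?thesis
    by simp
qed

lemma mem_tangent_space_if_gauge_fn_stationary:
  assumes p: "p \<in> frontier X"
    and g: "((\<lambda>t. gauge_fn (p + t *\<^sub>R v)) has_real_derivative 0) (at 0)"
  shows "v \<in> tangent_space (frontier X) p"
proof -
  \<comment> \<open>The radial projection of the line \<open>p + t v\<close> onto the boundary has velocity \<open>v\<close> at \<open>t = 0\<close>.\<close>
  define \<gamma> where "\<gamma> t = inverse (gauge_fn (p + t *\<^sub>R v)) *\<^sub>R (p + t *\<^sub>R v)" for t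
  define e where "e = norm p / (norm v + 1)"
  have g0: "gauge_fn (p + 0 *\<^sub>R v) = 1"
    using p frontier_iff_gauge_fn_eq_1 by simp
  have "(\<gamma> has_vector_derivative v) (at 0)"
    unfolding \<gamma>_def using g g0
    by (auto intro!: derivative_eq_intros)
  moreover have "\<gamma> 0 = p"
    using g0 by (simp add: \<gamma>_def)
  moreover have "e > 0"
    using frontier_nonzero[OF p] by (simp add: e_def add_nonneg_pos)
  moreover have "\<gamma> t \<in> frontier X" if "\<bar>t\<bar> < e" for t
  proof -
    have "\<bar>t\<bar> * norm v \<le> \<bar>t\<bar> * (norm v + 1)"
      by (simp add: mult_left_mono)
    also have "\<dots> < norm p"
      using that by (simp add: e_def pos_less_divide_eq add_nonneg_pos)
    finally have "p + t *\<^sub>R v \<noteq> 0"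
      by (metis add.inverse_unique norm_minus_cancel norm_scaleR order_less_irrefl)
    then show ?thesis
      using radial_proj_frontier by (simp add: \<gamma>_def radial_proj_def inverse_eq_divide)
  qed
  ultimately show ?thesis
    unfolding tangent_space_def by blast
qed

lemma radial_proj_lipschitz_on_segment:
  assumes seg: "0 \<notin> closed_segment u w"
  obtains L where "L \<ge> 0" "\<And>s t. s \<in> {0..1} \<Longrightarrow> t \<in> {0..1} \<Longrightarrow>
    norm (radial_proj ((1 - s) *\<^sub>R u + s *\<^sub>R w) - radial_proj ((1 - t) *\<^sub>R u + t *\<^sub>R w)) \<le> L * \<bar>s - t\<bar>"
proof -
  define \<sigma> where "\<sigma> t = (1 - t) *\<^sub>R u + t *\<^sub>R w" for t
  have \<sigma>_seg: "\<sigma> t \<in> closed_segment u w" if "t \<in> {0..1}" for t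
    using that unfolding \<sigma>_def closed_segment_def by auto
  \<comment> \<open>On the segment the gauge is bounded below by some \<open>m > 0\<close>.\<close>
  obtain y0 where y0: "y0 \<in> closed_segment u w" "\<forall>y\<in>closed_segment u w. norm y0 \<le> norm y"
    using continuous_attains_inf[OF compact_segment[of u w], of norm] by (auto intro: continuous_intros)
  define m where "m = norm y0 / outradius"
  have m: "m > 0"
    using y0(1) seg outradius(1) unfolding m_def by (metis divide_pos_pos zero_less_norm_iff)
  have gauge_\<sigma>: "m \<le> gauge_fn (\<sigma> t)" if "t \<in> {0..1}" for t
    using y0(2) \<sigma>_seg[OF that] outradius(1) norm_div_outradius_le_gauge_fn[of "\<sigma> t"]
    by (smt (verit) divide_right_mono m_def)
  define M where "M = norm u + norm w"
  have norm_\<sigma>: "norm (\<sigma> t) \<le> M" if "t \<in> {0..1}" for t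
  proof -
    have "norm (\<sigma> t) \<le> (1 - t) * norm u + t * norm w"
      using that norm_triangle_ineq[of "(1 - t) *\<^sub>R u" "t *\<^sub>R w"] by (simp add: \<sigma>_def)
    also have "\<dots> \<le> M"
      using that by (simp add: M_def add_mono mult_left_le_one_le)
    finally show ?thesis .
  qed
  define L where "L = (1/m + M * (1/inradius) / (m*m)) * norm (w - u)"
  show ?thesis
  proof (rule that)
    show "L \<ge> 0"
      using m inradius(1) by (simp add: L_def M_def)
    fix s t :: real assume st: "s \<in> {0..1}" "t \<in> {0..1}"
    have "norm (radial_proj (\<sigma> s) - radial_proj (\<sigma> t))
        \<le> (1/m + M * (1/inradius) / (m*m)) * norm (\<sigma> s - \<sigma> t)"
      unfolding radial_proj_def
      using m gauge_\<sigma>[OF st(1)] gauge_\<sigma>[OF st(2)] inradius(1) norm_\<sigma>[OF st(2)]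
        gauge_fn_lipschitz[of "\<sigma> s" "\<sigma> t"]
      by (intro norm_divide_scaleR_diff_le) auto
    also have "\<sigma> s - \<sigma> t = (s - t) *\<^sub>R (w - u)"
      by (simp add: \<sigma>_def algebra_simps)
    finally show "norm (radial_proj ((1 - s) *\<^sub>R u + s *\<^sub>R w) - radial_proj ((1 - t) *\<^sub>R u + t *\<^sub>R w))
        \<le> L * \<bar>s - t\<bar>"
      by (simp add: L_def \<sigma>_def mult_ac)
  qed
qed

end

lemma maximiser_notin_interior:
  fixes q :: "'a::real_inner"
  assumes q: "q \<noteq> 0" and max: "\<forall>y\<in>X. q \<bullet> y \<le> q \<bullet> a"
  shows "a \<notin> interior X"
proof
  assume "a \<in> interior X"
  then obtain e where e: "e > 0" "ball a e \<subseteq> X"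
    by (meson mem_interior)
  let ?w = "a + (e / (2 * norm q)) *\<^sub>R q"
  have "?w \<in> X"
    using e q by (intro subsetD[OF e(2)]) (simp add: dist_norm)
  then have "q \<bullet> ?w \<le> q \<bullet> a"
    using max by blast
  moreover have "q \<bullet> a < q \<bullet> ?w"
    using q e(1) by (simp add: inner_add_right)
  ultimately show False
    by linarith
qed

locale strictly_convex_origin_body = origin_convex_body +
  assumes strictly_convex: "strictly_convex X"
begin

lemma ex1_support_point:
  assumes q: "q \<noteq> 0"
  shows "\<exists>!y. y \<in> X \<and> (\<forall>y'\<in>X. q \<bullet> y' \<le> q \<bullet> y)"
proof -
  have "continuous_on X (\<lambda>y. q \<bullet> y)"
    by (intro continuous_intros)
  then obtain y where y: "y \<in> X" "\<forall>y'\<in>X. q \<bullet> y' \<le> q \<bullet> y"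
    using continuous_attains_sup[OF compact] zero_mem by (metis empty_iff)
  moreover have "y2 = y" if y2: "y2 \<in> X" "\<forall>y'\<in>X. q \<bullet> y' \<le> q \<bullet> y2" for y2
  proof (rule ccontr)
    assume "y2 \<noteq> y"
    \<comment> \<open>By strict convexity the midpoint would be an interior maximiser.\<close>
    then have "\<forall>t. 0 < t \<and> t < 1 \<longrightarrow> (1 - t) *\<^sub>R y + t *\<^sub>R y2 \<in> interior X"
      using strictly_convex y(1) y2(1) unfolding strictly_convex_def by metis
    from this[rule_format, of "1/2"] have "midpoint y y2 \<in> interior X"
      by (simp add: midpoint_def scaleR_right_distrib)
    moreover have "q \<bullet> y2 = q \<bullet> y"
      using y y2 by (meson order_antisym)
    then have "\<forall>y'\<in>X. q \<bullet> y' \<le> q \<bullet> midpoint y y2"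
      using y(2) by (simp add: midpoint_def inner_add_right)
    ultimately show False
      using maximiser_notin_interior[OF q] by blast
  qed
  ultimately show ?thesis
    by blast
qed

definition support_point :: "'a \<Rightarrow> 'a" where
  "support_point q = (THE y. y \<in> X \<and> (\<forall>y'\<in>X. q \<bullet> y' \<le> q \<bullet> y))"

lemma support_point:
  assumes "q \<noteq> 0"
  shows "support_point q \<in> X" and "\<And>y. y \<in> X \<Longrightarrow> q \<bullet> y \<le> q \<bullet> support_point q"
  using theI'[OF ex1_support_point[OF assms]] unfolding support_point_def by auto

lemma support_point_unique:
  assumes "q \<noteq> 0" and "y \<in> X" and "\<And>y'. y' \<in> X \<Longrightarrow> q \<bullet> y' \<le> q \<bullet> y"
  shows "support_point q = y"
  using ex1_support_point[OF assms(1)] support_point[OF assms(1)] assms(2,3) by blast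

lemma inner_less_support_point:
  assumes "q \<noteq> 0" and "y \<in> X" and "y \<noteq> support_point q"
  shows "q \<bullet> y < q \<bullet> support_point q"
proof (rule ccontr)
  assume "\<not> ?thesis"
  then have "\<And>y'. y' \<in> X \<Longrightarrow> q \<bullet> y' \<le> q \<bullet> y"
    using support_point(2)[OF assms(1)] by (meson order_trans not_less)
  then show False
    using support_point_unique[OF assms(1,2)] assms(3) by simp
qed

lemma inner_support_point_pos: "q \<noteq> 0 \<Longrightarrow> q \<bullet> support_point q > 0"
  using supporting_inner_pos support_point by blast

lemma support_point_frontier:
  assumes q: "q \<noteq> 0"
  shows "support_point q \<in> frontier X"
  using maximiser_notin_interior[OF q] support_point[OF q] closed
  by (simp add: frontier_def closure_closed)

lemma continuous_on_support_point: "continuous_on (- {0}) support_point"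
proof -
  let ?G = "{p. \<forall>y'\<in>X. fst p \<bullet> y' \<le> fst p \<bullet> snd p}"
  have "?G = (\<Inter>y'\<in>X. {p. fst p \<bullet> y' \<le> fst p \<bullet> snd p})"
    by auto
  then have "closed ?G"
    by (simp add: closed_INT closed_Collect_le continuous_intros)
  moreover have "(\<lambda>q. (q, support_point q)) ` (- {0}) = ((- {0}) \<times> X) \<inter> ?G"
  proof (intro equalityI subsetI)
    fix p assume p: "p \<in> ((- {0}) \<times> X) \<inter> ?G"
    obtain q y where qy: "p = (q, y)"
      by (cases p)
    with p have "q \<noteq> 0" "y \<in> X" "\<forall>y'\<in>X. q \<bullet> y' \<le> q \<bullet> y"
      by auto
    then have "y = support_point q"
      using support_point_unique by simp
    then show "p \<in> (\<lambda>q. (q, support_point q)) ` (- {0})"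
      using qy \<open>q \<noteq> 0\<close> by auto
  next
    fix p assume "p \<in> (\<lambda>q. (q, support_point q)) ` (- {0})"
    then obtain q where "q \<noteq> 0" "p = (q, support_point q)"
      by blast
    then show "p \<in> ((- {0}) \<times> X) \<inter> ?G"
      using support_point[of q] by simp
  qed
  ultimately have "closedin (top_of_set ((- {0}) \<times> X)) ((\<lambda>q. (q, support_point q)) ` (- {0}))"
    by (simp add: closedin_closed_Int)
  moreover have "support_point \<in> (- {0}) \<rightarrow> X"
    using support_point by auto
  ultimately show ?thesis
    using continuous_closed_graph_eq[OF compact] by blast
qed

end

section \<open>Normals and tangent spaces of a smooth boundary\<close>

lemma tangent_space_orthogonal_if_supporting:
  assumes "v \<in> tangent_space S p" and "\<forall>y\<in>S. a \<bullet> y \<le> a \<bullet> p"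
  shows "a \<bullet> v = 0"
proof -
  obtain \<gamma> e where \<gamma>: "e > 0" "\<gamma> 0 = p" "\<forall>t. \<bar>t\<bar> < e \<longrightarrow> \<gamma> t \<in> S"
    "(\<gamma> has_vector_derivative v) (at 0)"
    using assms(1) unfolding tangent_space_def by blast
  have "((\<lambda>t. a \<bullet> \<gamma> t) has_derivative (\<lambda>t. a \<bullet> (t *\<^sub>R v))) (at 0)"
    using \<gamma>(4) unfolding has_vector_derivative_def by (rule has_derivative_inner_right)
  moreover have "(\<lambda>t. a \<bullet> (t *\<^sub>R v)) = (*) (a \<bullet> v)"
    by (auto simp: mult.commute)
  ultimately have "((\<lambda>t. a \<bullet> \<gamma> t) has_real_derivative (a \<bullet> v)) (at 0)"
    by (simp add: has_field_derivative_def)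
  moreover have "\<forall>t. \<bar>0 - t\<bar> < e \<longrightarrow> a \<bullet> \<gamma> t \<le> a \<bullet> \<gamma> 0"
    using \<gamma>(2,3) assms(2) by auto
  ultimately show ?thesis
    using DERIV_local_max \<gamma>(1) by blast
qed

lemma eq_scaleR_if_orthogonal_complement_orthogonal:
  fixes \<nu> w :: "'a::real_inner"
  assumes "\<nu> \<noteq> 0" and "\<And>v. \<nu> \<bullet> v = 0 \<Longrightarrow> w \<bullet> v = 0"
  shows "w = ((w \<bullet> \<nu>) / (\<nu> \<bullet> \<nu>)) *\<^sub>R \<nu>"
proof -
  let ?r = "w - ((w \<bullet> \<nu>) / (\<nu> \<bullet> \<nu>)) *\<^sub>R \<nu>"
  have "\<nu> \<bullet> ?r = 0"
    using assms(1) by (simp add: inner_diff_right inner_commute)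
  moreover from this have "w \<bullet> ?r = 0"
    by (rule assms(2))
  ultimately have "?r \<bullet> ?r = 0"
    by (simp add: inner_diff_left inner_commute)
  then show ?thesis
    by simp
qed

lemma nonpos_near_if_gradient:
  fixes f :: "'a::real_inner \<Rightarrow> real"
  assumes f: "(f has_derivative (\<lambda>h. \<nu> \<bullet> h)) (at p)" and "f p = 0" and "c > 0"
  obtains d where "d > 0"
    and "\<And>w. norm (w - p) < d \<Longrightarrow> \<nu> \<bullet> (w - p) \<le> - c * norm (w - p) \<Longrightarrow> f w \<le> 0"
proof -
  obtain d where d: "d > 0"
    "\<And>w. norm (w - p) < d \<Longrightarrow> norm (f w - f p - \<nu> \<bullet> (w - p)) \<le> c * norm (w - p)"
    using f \<open>c > 0\<close> unfolding has_derivative_at_alt by blast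
  show ?thesis
  proof (rule that[OF d(1)])
    fix w assume "norm (w - p) < d" "\<nu> \<bullet> (w - p) \<le> - c * norm (w - p)"
    then show "f w \<le> 0"
      using abs_le_D1[OF d(2)[of w, unfolded real_norm_def]] \<open>f p = 0\<close> by simp
  qed
qed

lemma pos_near_if_gradient:
  fixes f :: "'a::real_inner \<Rightarrow> real"
  assumes f: "(f has_derivative (\<lambda>h. \<nu> \<bullet> h)) (at p)" and "f p = 0" and "c > 0"
  obtains d where "d > 0"
    and "\<And>w. norm (w - p) < d \<Longrightarrow> w \<noteq> p \<Longrightarrow> \<nu> \<bullet> (w - p) \<ge> c * norm (w - p) \<Longrightarrow> f w > 0"
proof -
  have "c/2 > 0"
    using \<open>c > 0\<close> by simp
  then obtain d where d: "d > 0"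
    "\<And>w. norm (w - p) < d \<Longrightarrow> norm (f w - f p - \<nu> \<bullet> (w - p)) \<le> (c/2) * norm (w - p)"
    using f unfolding has_derivative_at_alt by blast
  show ?thesis
  proof (rule that[OF d(1)])
    fix w assume "norm (w - p) < d" "w \<noteq> p" "\<nu> \<bullet> (w - p) \<ge> c * norm (w - p)"
    moreover have "c * norm (w - p) > 0"
      using \<open>c > 0\<close> \<open>w \<noteq> p\<close> by simp
    ultimately show "f w > 0"
      using abs_le_D2[OF d(2)[of w, unfolded real_norm_def]] \<open>f p = 0\<close> by simp
  qed
qed

lemma frontier_sublevel_eq_zero:
  fixes f :: "'a::metric_space \<Rightarrow> real"
  assumes "p \<in> frontier X" "p \<in> X" "open U" "p \<in> U" "X \<inter> U = {x\<in>U. f x \<le> 0}"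
    and "continuous (at p) f"
  shows "f p = 0"
proof (rule ccontr)
  assume "f p \<noteq> 0"
  moreover have "f p \<le> 0"
    using assms(2,4,5) by blast
  ultimately have "f p < 0"
    by simp
  then obtain V where V: "open V" "p \<in> V" "\<forall>x\<in>V. f x < 0"
    using assms(6) unfolding continuous_at_open by (metis lessThan_iff open_lessThan)
  then have "U \<inter> V \<subseteq> X"
    using assms(5) by fastforce
  then have "p \<in> interior X"
    using V assms(3,4) by (meson IntI interior_maximal open_Int subsetD interior_subset open_subset)
  then show False
    using assms(1) by (simp add: frontier_def)
qed

lemma supporting_if_sublevel_gradient:
  fixes f :: "'a::real_inner \<Rightarrow> real"
  assumes "convex X" "p \<in> X" "open U" "p \<in> U" "X \<inter> U = {x\<in>U. f x \<le> 0}" "f p = 0"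
    and f: "(f has_derivative (\<lambda>h. \<nu> \<bullet> h)) (at p)"
  shows "\<forall>y\<in>X. \<nu> \<bullet> y \<le> \<nu> \<bullet> p"
proof (rule ccontr)
  assume "\<not> ?thesis"
  then obtain y where y: "y \<in> X" "\<nu> \<bullet> (y - p) > 0"
    by (auto simp: inner_diff_right)
  define n where "n = norm (y - p)"
  define c where "c = \<nu> \<bullet> (y - p) / n"
  have n: "n > 0"
    using y(2) by (auto simp: n_def)
  then have c: "c > 0"
    using y(2) by (simp add: c_def)
  obtain d where d: "d > 0"
    and pos: "\<And>w. norm (w - p) < d \<Longrightarrow> w \<noteq> p \<Longrightarrow> \<nu> \<bullet> (w - p) \<ge> c * norm (w - p) \<Longrightarrow> f w > 0"
    using pos_near_if_gradient[OF f \<open>f p = 0\<close> c] by blast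
  obtain d' where d': "d' > 0" "ball p d' \<subseteq> U"
    using assms(3,4) by (meson openE)
  \<comment> \<open>A point of the segment from \<open>p\<close> to \<open>y\<close> close to \<open>p\<close> lies in \<open>X \<inter> U\<close> but has \<open>f > 0\<close>.\<close>
  define t where "t = min 1 (min d d' / (2 * n))"
  have t: "0 < t" "t \<le> 1"
    using d d' n by (auto simp: t_def)
  have "t * n \<le> (min d d' / (2 * n)) * n"
    using n by (intro mult_right_mono) (auto simp: t_def)
  also have "\<dots> < min d d'"
    using n d d' by (auto simp: min_def)
  finally have tn: "t * n < min d d'" .
  define w where "w = p + t *\<^sub>R (y - p)"
  have nw: "norm (w - p) = t * n"
    using t by (simp add: w_def n_def)
  have "\<nu> \<bullet> (w - p) = t * (\<nu> \<bullet> (y - p))"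
    by (simp add: w_def)
  also have "\<dots> = c * norm (w - p)"
    using n by (simp add: nw c_def)
  finally have "f w > 0"
    using nw tn t n by (intro pos) (auto simp: w_def)
  moreover have "w = (1 - t) *\<^sub>R p + t *\<^sub>R y"
    by (simp add: w_def algebra_simps)
  then have "w \<in> X"
    using assms(1,2) y(1) t by (simp add: convex_def)
  moreover have "w \<in> U"
    using d'(2) nw tn by (auto simp: dist_norm norm_minus_commute)
  ultimately show False
    using assms(5) by (metis (mono_tags, lifting) IntI mem_Collect_eq not_le)
qed

lemma shrunk_tangent_point:
  fixes p v \<nu> :: "'a::real_inner"
  assumes "\<nu> \<bullet> v = 0" and "s \<ge> 0"
  shows "\<nu> \<bullet> ((1 / (1 + s)) *\<^sub>R (p + t *\<^sub>R v) - p) = - (s * (\<nu> \<bullet> p)) / (1 + s)"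
    and "norm ((1 / (1 + s)) *\<^sub>R (p + t *\<^sub>R v) - p) \<le> (\<bar>t\<bar> * norm v + s * norm p) / (1 + s)"
proof -
  have s: "1 + s > 0"
    using assms(2) by simp
  have "(1 / (1 + s)) *\<^sub>R (p + t *\<^sub>R v) - p
      = (1 / (1 + s)) *\<^sub>R (p + t *\<^sub>R v) - (1 / (1 + s)) *\<^sub>R ((1 + s) *\<^sub>R p)"
    using s by simp
  also have "\<dots> = (1 / (1 + s)) *\<^sub>R (t *\<^sub>R v - s *\<^sub>R p)"
    by (simp add: scaleR_right_diff_distrib[symmetric] algebra_simps)
  finally have wp: "(1 / (1 + s)) *\<^sub>R (p + t *\<^sub>R v) - p = (1 / (1 + s)) *\<^sub>R (t *\<^sub>R v - s *\<^sub>R p)" .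
  then show "\<nu> \<bullet> ((1 / (1 + s)) *\<^sub>R (p + t *\<^sub>R v) - p) = - (s * (\<nu> \<bullet> p)) / (1 + s)"
    using assms(1) by (simp add: inner_diff_right)
  have "norm (t *\<^sub>R v - s *\<^sub>R p) \<le> \<bar>t\<bar> * norm v + s * norm p"
    using norm_triangle_ineq4[of "t *\<^sub>R v" "s *\<^sub>R p"] assms(2) by simp
  then show "norm ((1 / (1 + s)) *\<^sub>R (p + t *\<^sub>R v) - p) \<le> (\<bar>t\<bar> * norm v + s * norm p) / (1 + s)"
    using s by (simp add: wp divide_right_mono)
qed

locale smooth_strictly_convex_body = strictly_convex_origin_body +
  assumes C1_boundary: "\<forall>p\<in>frontier X. \<exists>U (f::'a \<Rightarrow> real) g. open U \<and> p \<in> U \<and>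
        (\<forall>x\<in>U. (f has_derivative (\<lambda>h. g x \<bullet> h)) (at x)) \<and> g p \<noteq> 0 \<and>
        X \<inter> U = {x\<in>U. f x \<le> 0}"
begin

lemma gauge_fn_along_tangent_le:
  assumes p: "p \<in> frontier X" and U: "open U" "p \<in> U" "X \<inter> U = {x\<in>U. f x \<le> 0}"
    and f: "(f has_derivative (\<lambda>h. \<nu> \<bullet> h)) (at p)" and "f p = 0" and "\<nu> \<bullet> p > 0"
    and v: "\<nu> \<bullet> v = 0" and "\<epsilon> > 0"
  obtains d where "d > 0" "\<And>t. \<bar>t\<bar> < d \<Longrightarrow> gauge_fn (p + t *\<^sub>R v) \<le> 1 + \<epsilon> * \<bar>t\<bar>"
proof -
  define a where "a = \<nu> \<bullet> p"
  define K where "K = norm v + \<epsilon> * norm p"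
  have a: "a > 0"
    using \<open>\<nu> \<bullet> p > 0\<close> by (simp add: a_def)
  have K: "K > 0"
    using \<open>\<epsilon> > 0\<close> frontier_nonzero[OF p] by (simp add: K_def add_nonneg_pos)
  have c: "\<epsilon> * a / K > 0"
    using \<open>\<epsilon> > 0\<close> a K by simp
  obtain d1 where d1: "d1 > 0"
    and nonpos: "\<And>w. norm (w - p) < d1 \<Longrightarrow> \<nu> \<bullet> (w - p) \<le> - (\<epsilon> * a / K) * norm (w - p) \<Longrightarrow> f w \<le> 0"
    using nonpos_near_if_gradient[OF f \<open>f p = 0\<close> c] by blast
  obtain d2 where d2: "d2 > 0" "ball p d2 \<subseteq> U"
    using U by (meson openE)
  show ?thesis
  proof (rule that)
    show "min d1 d2 / K > 0"
      using d1 d2 K by simp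
  next
    fix t :: real assume t: "\<bar>t\<bar> < min d1 d2 / K"
    \<comment> \<open>Shrinking \<open>p + t v\<close> by the factor \<open>1 + \<epsilon>\<bar>t\<bar>\<close> moves it into the cone where \<open>f \<le> 0\<close>.\<close>
    define s where "s = \<epsilon> * \<bar>t\<bar>"
    define w where "w = (1 / (1 + s)) *\<^sub>R (p + t *\<^sub>R v)"
    have s: "s \<ge> 0" "1 + s > 0"
      using \<open>\<epsilon> > 0\<close> by (simp_all add: s_def add_pos_nonneg)
    have nw: "norm (w - p) \<le> \<bar>t\<bar> * K / (1 + s)"
      using shrunk_tangent_point(2)[OF v s(1), of p t] by (simp add: w_def s_def K_def algebra_simps)
    also have "\<dots> \<le> \<bar>t\<bar> * K"
      using s K by (simp add: pos_divide_le_eq mult_le_cancel_left1 mult_less_0_iff)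
    also have "\<dots> < min d1 d2"
      using t K by (simp add: pos_less_divide_eq)
    finally have "norm (w - p) < d1" "w \<in> U"
      using d2 by (auto simp: dist_norm norm_minus_commute)
    moreover have "\<nu> \<bullet> (w - p) \<le> - (\<epsilon> * a / K) * norm (w - p)"
    proof -
      have "(\<epsilon> * a / K) * norm (w - p) \<le> (\<epsilon> * a / K) * (\<bar>t\<bar> * K / (1 + s))"
        using c nw by (intro mult_left_mono) auto
      also have "\<dots> = s * a / (1 + s)"
        using K by (simp add: s_def)
      also have "\<dots> = - (\<nu> \<bullet> (w - p))"
        using shrunk_tangent_point(1)[OF v s(1), of p t] by (simp add: w_def a_def)
      finally show ?thesis
        by simp
    qed
    ultimately have "w \<in> X"
      using nonpos U(3) by blast
    then have "gauge_fn (p + t *\<^sub>R v) / (1 + s) \<le> 1"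
      using s mem_iff_gauge_fn_le_1 gauge_fn_scaleR[of "1 / (1 + s)"] by (simp add: w_def)
    then show "gauge_fn (p + t *\<^sub>R v) \<le> 1 + \<epsilon> * \<bar>t\<bar>"
      using s by (simp add: s_def pos_divide_le_eq)
  qed
qed

lemma gauge_fn_along_tangent_stationary:
  assumes p: "p \<in> frontier X" and U: "open U" "p \<in> U" "X \<inter> U = {x\<in>U. f x \<le> 0}"
    and f: "(f has_derivative (\<lambda>h. \<nu> \<bullet> h)) (at p)" and "f p = 0"
    and supp: "\<forall>y\<in>X. \<nu> \<bullet> y \<le> \<nu> \<bullet> p" and "\<nu> \<bullet> p > 0" and v: "\<nu> \<bullet> v = 0"
  shows "((\<lambda>t. gauge_fn (p + t *\<^sub>R v)) has_real_derivative 0) (at 0)"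
  unfolding has_field_derivative_def has_derivative_at_alt
proof (intro conjI allI impI bounded_linear_mult_right)
  fix \<epsilon> :: real assume "\<epsilon> > 0"
  then obtain d where "d > 0" and upper: "\<And>t. \<bar>t\<bar> < d \<Longrightarrow> gauge_fn (p + t *\<^sub>R v) \<le> 1 + \<epsilon> * \<bar>t\<bar>"
    using gauge_fn_along_tangent_le[OF assms(1-6) \<open>\<nu> \<bullet> p > 0\<close> v] by blast
  have lower: "1 \<le> gauge_fn (p + t *\<^sub>R v)" for t
    using gauge_fn_ge_if_supporting[OF supp \<open>\<nu> \<bullet> p > 0\<close>, of "p + t *\<^sub>R v"] v \<open>\<nu> \<bullet> p > 0\<close>
    by (simp add: inner_add_right)
  have "gauge_fn (p + 0 *\<^sub>R v) = 1"
    using p frontier_iff_gauge_fn_eq_1 by simp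
  show "\<exists>d>0. \<forall>t. norm (t - 0) < d \<longrightarrow>
      norm (gauge_fn (p + t *\<^sub>R v) - gauge_fn (p + 0 *\<^sub>R v) - 0 * (t - 0)) \<le> \<epsilon> * norm (t - 0)"
  proof (intro exI[of _ d] conjI allI impI)
    fix t :: real assume "norm (t - 0) < d"
    then have "gauge_fn (p + t *\<^sub>R v) \<le> 1 + \<epsilon> * \<bar>t\<bar>"
      using upper by simp
    then show "norm (gauge_fn (p + t *\<^sub>R v) - gauge_fn (p + 0 *\<^sub>R v) - 0 * (t - 0)) \<le> \<epsilon> * norm (t - 0)"
      using lower[of t] \<open>gauge_fn (p + 0 *\<^sub>R v) = 1\<close> by simp
  qed (rule \<open>d > 0\<close>)
qed

lemma frontier_normal:
  assumes p: "p \<in> frontier X"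
  obtains \<nu> where "\<nu> \<noteq> 0" "\<forall>y\<in>X. \<nu> \<bullet> y \<le> \<nu> \<bullet> p"
    "tangent_space (frontier X) p = {v. \<nu> \<bullet> v = 0}"
proof -
  obtain U f g where U: "open U" "p \<in> U" "X \<inter> U = {x\<in>U. f x \<le> 0}"
    and f: "\<forall>x\<in>U. (f has_derivative (\<lambda>h. g x \<bullet> h)) (at x)" and "g p \<noteq> 0"
    using C1_boundary p by meson
  define \<nu> where "\<nu> = g p"
  have f: "(f has_derivative (\<lambda>h. \<nu> \<bullet> h)) (at p)"
    using f U(2) by (simp add: \<nu>_def)
  have "f p = 0"
    using frontier_sublevel_eq_zero[OF p _ U] p frontier_subset has_derivative_continuous[OF f]
    by blast
  then have supp: "\<forall>y\<in>X. \<nu> \<bullet> y \<le> \<nu> \<bullet> p"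
    using supporting_if_sublevel_gradient[OF convex _ U(1,2,3) _ f] p frontier_subset by blast
  have "\<nu> \<noteq> 0"
    using \<open>g p \<noteq> 0\<close> by (simp add: \<nu>_def)
  then have "\<nu> \<bullet> p > 0"
    using supporting_inner_pos supp by blast
  have "tangent_space (frontier X) p = {v. \<nu> \<bullet> v = 0}"
  proof (intro equalityI subsetI CollectI)
    fix v assume "v \<in> tangent_space (frontier X) p"
    then show "\<nu> \<bullet> v = 0"
      using tangent_space_orthogonal_if_supporting supp frontier_subset by blast
  next
    fix v assume "v \<in> {v. \<nu> \<bullet> v = 0}"
    then show "v \<in> tangent_space (frontier X) p"
      using mem_tangent_space_if_gauge_fn_stationary[OF p]
        gauge_fn_along_tangent_stationary[OF p U f \<open>f p = 0\<close> supp \<open>\<nu> \<bullet> p > 0\<close>] by blast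
  qed
  then show ?thesis
    using that \<open>\<nu> \<noteq> 0\<close> supp by blast
qed

end

section \<open>Reflection points of the outer billiard\<close>

lemma char_dirs_eq_line_cJ:
  fixes X :: "(complex ^ 'n) set"
  assumes "\<nu> \<noteq> 0" and tangent: "tangent_space (frontier X) p = {v. \<nu> \<bullet> v = 0}"
  shows "char_dirs X p = range (\<lambda>t. t *\<^sub>R cJ \<nu>)"
proof (intro equalityI subsetI)
  fix u assume "u \<in> char_dirs X p"
  then have "\<And>v. \<nu> \<bullet> v = 0 \<Longrightarrow> cJ u \<bullet> v = 0"
    unfolding char_dirs_def tangent omega_def by auto
  then have "cJ u = ((cJ u \<bullet> \<nu>) / (\<nu> \<bullet> \<nu>)) *\<^sub>R \<nu>"
    using eq_scaleR_if_orthogonal_complement_orthogonal[OF assms(1)] by blast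
  then have "cJ (cJ u) = ((cJ u \<bullet> \<nu>) / (\<nu> \<bullet> \<nu>)) *\<^sub>R cJ \<nu>"
    by (metis cJ_scaleR)
  then have "u = (- ((cJ u \<bullet> \<nu>) / (\<nu> \<bullet> \<nu>))) *\<^sub>R cJ \<nu>"
    by (simp add: cJ_cJ) (metis minus_minus)
  then show "u \<in> range (\<lambda>t. t *\<^sub>R cJ \<nu>)"
    by blast
next
  fix u assume "u \<in> range (\<lambda>t. t *\<^sub>R cJ \<nu>)"
  then obtain t where t: "u = t *\<^sub>R cJ \<nu>"
    by blast
  have "\<nu> \<bullet> u = 0"
    using inner_cJ_self[of \<nu>] by (simp add: t inner_commute)
  moreover have "omega u v = 0" if "\<nu> \<bullet> v = 0" for v
    using that by (simp add: t omega_def cJ_scaleR cJ_cJ)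
  ultimately show "u \<in> char_dirs X p"
    unfolding char_dirs_def tangent by auto
qed

lemma range_scaleR_scaleR_nonzero:
  fixes w :: "'a::real_vector"
  assumes "k \<noteq> 0"
  shows "range (\<lambda>t. t *\<^sub>R (k *\<^sub>R w)) = range (\<lambda>t. t *\<^sub>R w)"
proof (intro equalityI subsetI)
  fix u assume "u \<in> range (\<lambda>t. t *\<^sub>R (k *\<^sub>R w))"
  then obtain t where "u = (t * k) *\<^sub>R w"
    by auto
  then show "u \<in> range (\<lambda>t. t *\<^sub>R w)"
    by blast
next
  fix u assume "u \<in> range (\<lambda>t. t *\<^sub>R w)"
  then obtain t where "u = (t / k) *\<^sub>R (k *\<^sub>R w)"
    using assms by auto
  then show "u \<in> range (\<lambda>t. t *\<^sub>R (k *\<^sub>R w))"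
    by blast
qed

locale billiard_table = smooth_strictly_convex_body X for X :: "(complex ^ 'n) set"
begin

definition is_ob_point :: "complex ^ 'n \<Rightarrow> complex ^ 'n \<Rightarrow> bool" where
  "is_ob_point z x \<longleftrightarrow> x \<in> frontier X \<and> z \<noteq> x \<and>
       {x + t *\<^sub>R (z - x) | t. True} = char_line X x \<and> omega x (x - z) > 0"

lemma is_ob_point_support_point:
  assumes "is_ob_point z x"
  shows "cJ (z - x) \<noteq> 0" and "support_point (cJ (z - x)) = x"
proof -
  have x: "x \<in> frontier X" "{x + t *\<^sub>R (z - x) | t. True} = char_line X x" "omega x (x - z) > 0"
    using assms unfolding is_ob_point_def by auto
  obtain \<nu> where \<nu>: "\<nu> \<noteq> 0" "\<forall>y\<in>X. \<nu> \<bullet> y \<le> \<nu> \<bullet> x"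
      "tangent_space (frontier X) x = {v. \<nu> \<bullet> v = 0}"
    using frontier_normal[OF x(1)] by blast
  have "z \<in> char_line X x"
    unfolding x(2)[symmetric] by (rule CollectI, rule exI[of _ 1]) simp
  then obtain u where "z = x + u" "u \<in> char_dirs X x"
    unfolding char_line_def by blast
  then obtain t where zx: "z - x = t *\<^sub>R cJ \<nu>"
    using char_dirs_eq_line_cJ[OF \<nu>(1,3)] by auto
  then have "x - z = - (t *\<^sub>R cJ \<nu>)"
    by (simp add: algebra_simps)
  then have "omega x (x - z) = - t * (\<nu> \<bullet> x)"
    by (simp add: omega_def inner_cJ_cJ inner_commute)
  then have "t < 0"
    using x(3) supporting_inner_pos[OF \<nu>(1,2)] by (simp add: mult_less_0_iff)
  moreover have cz: "cJ (z - x) = (- t) *\<^sub>R \<nu>"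
    by (simp add: zx cJ_scaleR cJ_cJ)
  ultimately show "cJ (z - x) \<noteq> 0"
    using \<nu>(1) by simp
  then show "support_point (cJ (z - x)) = x"
    using \<nu>(2) x(1) frontier_subset \<open>t < 0\<close>
    by (intro support_point_unique) (auto simp: cz mult_left_mono)
qed

lemma is_ob_point_unique:
  assumes "is_ob_point z x1" and "is_ob_point z x2"
  shows "x1 = x2"
proof (rule ccontr)
  assume ne: "x1 \<noteq> x2"
  note s1 = is_ob_point_support_point[OF assms(1)] and s2 = is_ob_point_support_point[OF assms(2)]
  have "x1 \<in> X" "x2 \<in> X"
    using support_point(1) s1 s2 by metis+
  \<comment> \<open>Each point strictly beats the other for its own form; the two gains cancel by antisymmetry.\<close>
  then have "cJ (z - x1) \<bullet> x2 < cJ (z - x1) \<bullet> x1" "cJ (z - x2) \<bullet> x1 < cJ (z - x2) \<bullet> x2"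
    using inner_less_support_point s1 s2 ne by metis+
  then have "omega z x2 - omega x1 x2 < omega z x1" "omega z x1 - omega x2 x1 < omega z x2"
    by (simp_all add: omega_def[symmetric] omega_diff_left omega_self)
  then show False
    using omega_antisym[of x1 x2] by linarith
qed

lemma char_dirs_support_point:
  assumes q: "q \<noteq> 0"
  shows "char_dirs X (support_point q) = range (\<lambda>t. t *\<^sub>R cJ q)"
proof -
  obtain \<nu> where \<nu>: "\<nu> \<noteq> 0" "\<forall>y\<in>X. \<nu> \<bullet> y \<le> \<nu> \<bullet> support_point q"
      "tangent_space (frontier X) (support_point q) = {v. \<nu> \<bullet> v = 0}"
    using frontier_normal[OF support_point_frontier[OF q]] by blast
  have "q \<bullet> v = 0" if "\<nu> \<bullet> v = 0" for v
    using tangent_space_orthogonal_if_supporting[of v "frontier X" "support_point q" q]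
      \<nu>(3) that frontier_subset support_point(2)[OF q] by auto
  then have q\<nu>: "q = ((q \<bullet> \<nu>) / (\<nu> \<bullet> \<nu>)) *\<^sub>R \<nu>"
    by (rule eq_scaleR_if_orthogonal_complement_orthogonal[OF \<nu>(1)])
  then have "(q \<bullet> \<nu>) / (\<nu> \<bullet> \<nu>) \<noteq> 0"
    using q by (metis scaleR_zero_left)
  moreover have "cJ q = ((q \<bullet> \<nu>) / (\<nu> \<bullet> \<nu>)) *\<^sub>R cJ \<nu>"
    using q\<nu> by (metis cJ_scaleR)
  ultimately show ?thesis
    using char_dirs_eq_line_cJ[OF \<nu>(1,3)] range_scaleR_scaleR_nonzero by metis
qed

lemma is_ob_point_if_support_point:
  assumes "z \<notin> X" and "c \<in> X" and sp: "support_point (cJ (z - c)) = c"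
  shows "is_ob_point z c"
proof -
  have q: "cJ (z - c) \<noteq> 0"
    using assms(1,2) by (auto simp: cJ_eq_0_iff)
  have "omega c (c - z) = cJ (z - c) \<bullet> support_point (cJ (z - c))"
    using omega_antisym[of c "c - z"] omega_minus_left[of "z - c" c] sp by (simp add: omega_def)
  then have "omega c (c - z) > 0"
    using inner_support_point_pos[OF q] by simp
  moreover have "{c + t *\<^sub>R (z - c) | t. True} = char_line X c"
  proof -
    have "char_dirs X c = range (\<lambda>t. t *\<^sub>R cJ (cJ (z - c)))"
      using char_dirs_support_point[OF q] sp by simp
    also have "\<dots> = range (\<lambda>t. t *\<^sub>R (z - c))"
      using range_scaleR_scaleR_nonzero[of "- 1" "z - c"] by (simp add: cJ_cJ)
    finally have "char_line X c = (+) c ` range (\<lambda>t. t *\<^sub>R (z - c))"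
      by (auto simp: char_line_def)
    then show ?thesis
      by auto
  qed
  moreover have "c \<in> frontier X"
    using support_point_frontier[OF q] sp by simp
  moreover have "z \<noteq> c"
    using assms(1,2) by auto
  ultimately show ?thesis
    unfolding is_ob_point_def by (intro conjI)
qed

lemma ex_is_ob_point:
  assumes z: "z \<notin> X"
  shows "\<exists>x. is_ob_point z x"
proof -
  define F where "F c = support_point (cJ (z - c))" for c
  have nz: "cJ (z - c) \<noteq> 0" if "c \<in> X" for c
    using that z by (auto simp: cJ_eq_0_iff)
  have "continuous_on X (\<lambda>c. cJ (z - c))"
    by (intro continuous_intros bounded_linear.continuous_on[OF bounded_linear_cJ])
  then have "continuous_on X F"
    unfolding F_def by (rule continuous_on_compose2[OF continuous_on_support_point]) (use nz in auto)
  moreover have "F \<in> X \<rightarrow> X"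
    unfolding F_def using support_point(1) nz by auto
  ultimately obtain c where "c \<in> X" "F c = c"
    using brouwer[OF compact convex] zero_mem by blast
  then show ?thesis
    using is_ob_point_if_support_point[OF z] by (auto simp: F_def)
qed

lemma ob_point_is_ob_point: "z \<notin> X \<Longrightarrow> is_ob_point z (ob_point X z)"
  unfolding ob_point_def is_ob_point_def[symmetric]
  by (rule theI') (use ex_is_ob_point is_ob_point_unique in blast)

lemma support_point_ob_point:
  assumes "z \<notin> X"
  shows "cJ (z - ob_point X z) \<noteq> 0" and "support_point (cJ (z - ob_point X z)) = ob_point X z"
  using is_ob_point_support_point[OF ob_point_is_ob_point[OF assms]] by auto

lemma outer_billiard_notin:
  assumes z: "z \<notin> X"
  shows "outer_billiard X z \<notin> X"
proof
  define x where "x = ob_point X z"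
  define q where "q = cJ (z - x)"
  have q: "q \<noteq> 0" "support_point q = x"
    using support_point_ob_point[OF z] by (simp_all add: x_def q_def)
  assume "outer_billiard X z \<in> X"
  then have "2 *\<^sub>R x - z \<in> X"
    by (simp add: outer_billiard_def x_def)
  moreover have "2 *\<^sub>R x - z \<noteq> x"
    using z support_point(1)[OF q(1)] q(2) by (auto simp: scaleR_2 algebra_simps)
  moreover have "q \<bullet> (z - x) = 0"
    by (simp add: q_def inner_cJ_self)
  then have "q \<bullet> (2 *\<^sub>R x - z) = q \<bullet> x"
    by (simp add: inner_diff_right)
  ultimately show False
    using inner_less_support_point[OF q(1), of "2 *\<^sub>R x - z"] q(2) by simp
qed

end

section \<open>The symplectic support function\<close>

lemma eq_endpoints_if_locally_flat:
  fixes \<psi> :: "real \<Rightarrow> real"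
  assumes flat: "\<And>t e. t \<in> {0..1} \<Longrightarrow> e > 0 \<Longrightarrow>
    \<exists>d>0. \<forall>s\<in>{0..1}. \<bar>s - t\<bar> < d \<longrightarrow> \<bar>\<psi> s - \<psi> t\<bar> \<le> e * \<bar>s - t\<bar>"
  shows "\<psi> 0 = \<psi> 1"
proof -
  have "(\<psi> has_derivative (\<lambda>h. 0)) (at t within {0..1})" if "t \<in> {0..1}" for t
    unfolding has_derivative_within_alt using flat[OF that] by simp
  then obtain c where "\<forall>t\<in>{0..1::real}. \<psi> t = c"
    using has_derivative_zero_constant[OF convex_real_interval(5)] by blast
  then show ?thesis
    by simp
qed

locale symplectic_convex_body = strictly_convex_origin_body X for X :: "(complex ^ 'n) set"
begin

definition symp_support_point :: "complex ^ 'n \<Rightarrow> complex ^ 'n" where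
  "symp_support_point x = support_point (cJ x)"

definition symp_support :: "complex ^ 'n \<Rightarrow> real" where
  "symp_support x = omega x (symp_support_point x)"

definition reciprocal :: bool where
  "reciprocal \<longleftrightarrow> (\<forall>x\<in>frontier X. \<forall>y\<in>X. omega y (symp_support_point x) \<le> symp_support x)"

lemma symp_support_point_mem: "x \<noteq> 0 \<Longrightarrow> symp_support_point x \<in> X"
  unfolding symp_support_point_def using support_point(1) cJ_eq_0_iff by blast

lemma omega_le_symp_support: "x \<noteq> 0 \<Longrightarrow> y \<in> X \<Longrightarrow> omega x y \<le> symp_support x"
  unfolding symp_support_def symp_support_point_def omega_def
  using support_point(2) cJ_eq_0_iff by blast

lemma symp_support_pos: "x \<noteq> 0 \<Longrightarrow> symp_support x > 0"
  unfolding symp_support_def symp_support_point_def omega_def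
  using inner_support_point_pos cJ_eq_0_iff by blast

lemma continuous_on_symp_support_point: "continuous_on (- {0}) symp_support_point"
proof -
  have "continuous_on (- {0}) cJ"
    by (rule linear_continuous_on[OF bounded_linear_cJ])
  moreover have "cJ ` (- {0}) \<subseteq> - {0}"
    by (auto simp: cJ_eq_0_iff)
  ultimately show ?thesis
    unfolding symp_support_point_def[abs_def]
    by (rule continuous_on_compose2[OF continuous_on_support_point])
qed

lemma abs_symp_support_diff_le:
  assumes "reciprocal" and a: "a \<in> frontier X" and b: "b \<in> frontier X"
  shows "\<bar>symp_support a - symp_support b\<bar> \<le> norm (a - b) * norm (symp_support_point a - symp_support_point b)"
proof -
  define S where "S = symp_support_point"
  define w where "w = omega (b - a) (S b - S a)"
  have a0: "a \<noteq> 0" and b0: "b \<noteq> 0"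
    using a b frontier_nonzero by auto
  have "a \<in> X" "b \<in> X"
    using a b frontier_subset by auto
  then have "omega b (S a) \<le> symp_support a" "omega a (S b) \<le> symp_support a"
      "omega a (S b) \<le> symp_support b" "omega b (S a) \<le> symp_support b"
    using assms a0 b0 omega_le_symp_support symp_support_point_mem
    unfolding reciprocal_def S_def by blast+
  moreover have "symp_support b = omega b (S a) + omega a (S b) - symp_support a + w"
      "symp_support a = omega a (S b) + omega b (S a) - symp_support b + w"
    by (simp_all add: w_def S_def symp_support_def omega_diff_left omega_diff_right)
  moreover have "\<bar>w\<bar> \<le> norm (a - b) * norm (S a - S b)"
    unfolding w_def using abs_omega_le[of "b - a" "S b - S a"] by (simp add: norm_minus_commute)
  ultimately show ?thesis
    unfolding S_def by linarith
qed

lemma symp_support_eq_along_lipschitz_path: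
  assumes "reciprocal" and pF: "\<And>t. t \<in> {0..1} \<Longrightarrow> p t \<in> frontier X"
    and "L \<ge> 0" and p_lip: "\<And>s t. s \<in> {0..1} \<Longrightarrow> t \<in> {0..1} \<Longrightarrow> norm (p s - p t) \<le> L * \<bar>s - t\<bar>"
  shows "symp_support (p 0) = symp_support (p 1)"
proof (rule eq_endpoints_if_locally_flat[of "\<lambda>t. symp_support (p t)"])
  fix t e :: real assume t: "t \<in> {0..1}" and "e > 0"
  have "isCont symp_support_point (p t)"
    using continuous_on_symp_support_point pF[OF t] frontier_nonzero
    by (simp add: continuous_on_eq_continuous_at open_Compl)
  moreover have "e / (L + 1) > 0"
    using \<open>e > 0\<close> \<open>L \<ge> 0\<close> by simp
  ultimately obtain d where d: "d > 0"
      "\<And>x. dist x (p t) < d \<Longrightarrow> dist (symp_support_point x) (symp_support_point (p t)) < e / (L + 1)"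
    unfolding continuous_at_eps_delta by blast
  show "\<exists>d>0. \<forall>s\<in>{0..1}. \<bar>s - t\<bar> < d \<longrightarrow> \<bar>symp_support (p s) - symp_support (p t)\<bar> \<le> e * \<bar>s - t\<bar>"
  proof (intro exI[of _ "d / (L + 1)"] conjI ballI impI)
    show "d / (L + 1) > 0"
      using d(1) \<open>L \<ge> 0\<close> by simp
    fix s assume s: "s \<in> {0..1}" and "\<bar>s - t\<bar> < d / (L + 1)"
    then have "(L + 1) * \<bar>s - t\<bar> < d"
      using \<open>L \<ge> 0\<close> by (simp add: pos_less_divide_eq mult.commute)
    then have "dist (p s) (p t) < d"
      using p_lip[OF s t] \<open>L \<ge> 0\<close> by (simp add: dist_norm algebra_simps)
    then have "norm (symp_support_point (p s) - symp_support_point (p t)) \<le> e / (L + 1)"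
      using d(2) by (simp add: dist_norm less_imp_le)
    then have "\<bar>symp_support (p s) - symp_support (p t)\<bar> \<le> (L * \<bar>s - t\<bar>) * (e / (L + 1))"
      using abs_symp_support_diff_le[OF assms(1) pF[OF s] pF[OF t]] p_lip[OF s t]
      by (smt (verit) mult_mono norm_ge_zero)
    also have "\<dots> \<le> e * \<bar>s - t\<bar>"
      using \<open>L \<ge> 0\<close> \<open>e > 0\<close> by (simp add: field_simps mult_left_mono)
    finally show "\<bar>symp_support (p s) - symp_support (p t)\<bar> \<le> e * \<bar>s - t\<bar>" .
  qed
qed

lemma symp_support_radial_eq:
  assumes "reciprocal" and seg: "0 \<notin> closed_segment u w"
  shows "symp_support (radial_proj u) = symp_support (radial_proj w)"
proof -
  define p where "p t = radial_proj ((1 - t) *\<^sub>R u + t *\<^sub>R w)" for t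
  obtain L where "L \<ge> 0"
    "\<And>s t. s \<in> {0..1} \<Longrightarrow> t \<in> {0..1} \<Longrightarrow> norm (p s - p t) \<le> L * \<bar>s - t\<bar>"
    unfolding p_def using radial_proj_lipschitz_on_segment[OF seg] by blast
  moreover have "p t \<in> frontier X" if "t \<in> {0..1}" for t
    using that seg radial_proj_frontier unfolding p_def closed_segment_def by force
  ultimately have "symp_support (p 0) = symp_support (p 1)"
    using symp_support_eq_along_lipschitz_path[OF assms(1)] by blast
  then show ?thesis
    by (simp add: p_def)
qed

end

lemma zero_notin_closed_segment_if_orthogonal:
  fixes u w :: "'a::real_inner"
  assumes "u \<noteq> 0" "w \<noteq> 0" "u \<bullet> w = 0"
  shows "0 \<notin> closed_segment u w"
proof
  assume "0 \<in> closed_segment u w"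
  then obtain t where t: "(1 - t) *\<^sub>R u + t *\<^sub>R w = 0"
    unfolding closed_segment_def by auto
  then have "((1 - t) *\<^sub>R u + t *\<^sub>R w) \<bullet> u = 0"
    by simp
  moreover have "w \<bullet> u = 0"
    using assms(3) by (simp add: inner_commute)
  ultimately have "(1 - t) * (u \<bullet> u) = 0"
    by (simp add: inner_add_left)
  then have "t = 1"
    using assms(1) by simp
  then show False
    using t assms(2) by simp
qed

lemma inner_eq_0_if_zero_in_closed_segment:
  fixes a b v :: "'a::real_inner"
  assumes "0 \<in> closed_segment a b" "a \<noteq> 0" "a \<bullet> v = 0"
  shows "b \<bullet> v = 0"
proof -
  obtain s where s: "(1 - s) *\<^sub>R a + s *\<^sub>R b = 0"
    using assms(1) unfolding closed_segment_def by auto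
  then have "s \<noteq> 0"
    using assms(2) by auto
  moreover have "((1 - s) *\<^sub>R a + s *\<^sub>R b) \<bullet> v = 0"
    using s by simp
  then have "s * (b \<bullet> v) = 0"
    using assms(3) by (simp add: inner_add_left)
  ultimately show ?thesis
    by simp
qed

context symplectic_convex_body
begin

lemma symp_support_eq_frontier:
  assumes "reciprocal" and a: "a \<in> frontier X" and b: "b \<in> frontier X"
  shows "symp_support a = symp_support b"
proof -
  have eq: "symp_support u = symp_support w"
    if "0 \<notin> closed_segment u w" "u \<in> frontier X" "w \<in> frontier X" for u w
    using symp_support_radial_eq[OF assms(1) that(1)] radial_proj_eq_self that(2,3) by simp
  have a0: "a \<noteq> 0" and b0: "b \<noteq> 0" and Ja: "cJ a \<noteq> 0"
    using a b frontier_nonzero cJ_eq_0_iff by auto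
  show ?thesis
  proof (cases "0 \<in> closed_segment a b")
    case False
    then show ?thesis
      using eq a b by blast
  next
    case True
    \<comment> \<open>Then \<open>b\<close> is a negative multiple of \<open>a\<close>; go around the origin through \<open>J a\<close>.\<close>
    have aJ: "a \<bullet> cJ a = 0"
      using inner_cJ_self[of a] by (simp add: inner_commute)
    then have "cJ a \<bullet> b = 0"
      using inner_eq_0_if_zero_in_closed_segment[OF True a0] by (metis inner_commute)
    then have "symp_support (radial_proj (cJ a)) = symp_support b"
      using symp_support_radial_eq[OF assms(1)] zero_notin_closed_segment_if_orthogonal[OF Ja b0]
        radial_proj_eq_self[OF b] by metis
    moreover have "symp_support a = symp_support (radial_proj (cJ a))"
      using symp_support_radial_eq[OF assms(1)] zero_notin_closed_segment_if_orthogonal[OF a0 Ja aJ]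
        radial_proj_eq_self[OF a] by metis
    ultimately show ?thesis
      by simp
  qed
qed

lemma subset_scaleR_symp_polar:
  assumes "\<alpha> > 0" and le: "\<And>x. x \<in> frontier X \<Longrightarrow> symp_support x \<le> \<alpha>"
  shows "X \<subseteq> (\<lambda>y. \<alpha> *\<^sub>R y) ` symp_polar X"
proof
  fix x assume x: "x \<in> X"
  have "omega x' x \<le> \<alpha>" if x': "x' \<in> X" for x'
  proof (cases "x' = 0")
    case False
    define xh where "xh = radial_proj x'"
    have xh: "xh \<in> frontier X"
      unfolding xh_def by (rule radial_proj_frontier[OF False])
    have g: "0 < gauge_fn x'" "gauge_fn x' \<le> 1"
      using gauge_fn_pos[OF False] x' mem_iff_gauge_fn_le_1 by auto
    have "omega x' x = gauge_fn x' * omega xh x"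
      using g by (simp add: xh_def radial_proj_def omega_scaleR_left)
    also have "\<dots> \<le> gauge_fn x' * \<alpha>"
      using omega_le_symp_support[OF frontier_nonzero[OF xh] x] le[OF xh] g
      by (intro mult_left_mono) auto
    also have "\<dots> \<le> \<alpha>"
      using g \<open>\<alpha> > 0\<close> by simp
    finally show ?thesis .
  next
    case True
    then show ?thesis
      using \<open>\<alpha> > 0\<close> by (simp add: omega_zero_left)
  qed
  then have "(1/\<alpha>) *\<^sub>R x \<in> symp_polar X"
    using \<open>\<alpha> > 0\<close> by (simp add: symp_polar_def omega_scaleR_right)
  moreover have "x = \<alpha> *\<^sub>R ((1/\<alpha>) *\<^sub>R x)"
    using \<open>\<alpha> > 0\<close> by simp
  ultimately show "x \<in> (\<lambda>y. \<alpha> *\<^sub>R y) ` symp_polar X"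
    by blast
qed

lemma scaleR_symp_polar_subset:
  assumes "centrally_symmetric X" and "\<alpha> > 0"
    and ge: "\<And>x. x \<in> frontier X \<Longrightarrow> \<alpha> \<le> symp_support x"
  shows "(\<lambda>y. \<alpha> *\<^sub>R y) ` symp_polar X \<subseteq> X"
proof
  fix v assume "v \<in> (\<lambda>y. \<alpha> *\<^sub>R y) ` symp_polar X"
  then obtain y where y: "y \<in> symp_polar X" "v = \<alpha> *\<^sub>R y"
    by blast
  show "v \<in> X"
  proof (rule ccontr)
    assume "v \<notin> X"
    then have g: "gauge_fn v > 1" "v \<noteq> 0"
      using mem_iff_gauge_fn_le_1[of v] zero_mem by (simp_all add: not_le) blast
    define vh where "vh = radial_proj v"
    have vh: "vh \<in> frontier X"
      unfolding vh_def by (rule radial_proj_frontier[OF g(2)])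
    \<comment> \<open>By central symmetry \<open>- symp_support_point vh \<in> X\<close> tests \<open>y\<close> against the polar.\<close>
    have "- symp_support_point vh \<in> X"
      using assms(1) symp_support_point_mem[OF frontier_nonzero[OF vh]]
      unfolding centrally_symmetric_def by blast
    then have "omega (- symp_support_point vh) y \<le> 1"
      using y(1) unfolding symp_polar_def by blast
    moreover have "(gauge_fn v / \<alpha>) *\<^sub>R vh = ((gauge_fn v / \<alpha>) * (1 / gauge_fn v) * \<alpha>) *\<^sub>R y"
      by (simp add: vh_def radial_proj_def y(2))
    then have "y = (gauge_fn v / \<alpha>) *\<^sub>R vh"
      using g \<open>\<alpha> > 0\<close> by simp
    then have "omega (- symp_support_point vh) y = (gauge_fn v / \<alpha>) * symp_support vh"
      using omega_antisym[of "symp_support_point vh" vh]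
      by (simp add: symp_support_def omega_minus_left omega_scaleR_right)
    moreover have "(gauge_fn v / \<alpha>) * \<alpha> \<le> (gauge_fn v / \<alpha>) * symp_support vh"
      using ge[OF vh] g \<open>\<alpha> > 0\<close> by (intro mult_left_mono) auto
    moreover have "(gauge_fn v / \<alpha>) * \<alpha> = gauge_fn v"
      using \<open>\<alpha> > 0\<close> by simp
    ultimately show False
      using g(1) by linarith
  qed
qed

end

sublocale billiard_table \<subseteq> symplectic_convex_body ..

context billiard_table
begin

lemma reciprocal_if_symmetric_orbits:
  assumes orbits: "\<forall>x\<in>frontier X. \<exists>z. z \<notin> X \<and>
    (outer_billiard X ^^ 2) z = - z \<and> x = (1/2) *\<^sub>R (z + outer_billiard X z)"
  shows "reciprocal"
  unfolding reciprocal_def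
proof (intro ballI)
  fix x y assume x: "x \<in> frontier X" and y: "y \<in> X"
  obtain z where z: "z \<notin> X" "(outer_billiard X ^^ 2) z = - z"
      and mid: "x = (1/2) *\<^sub>R (z + outer_billiard X z)"
    using orbits x by blast
  have Tz: "outer_billiard X z = 2 *\<^sub>R x - z"
    using mid by (simp add: outer_billiard_def)
  then have x_ob: "ob_point X z = x"
    using mid by (simp add: outer_billiard_def)
  have Tz_out: "outer_billiard X z \<notin> X"
    by (rule outer_billiard_notin[OF z(1)])
  \<comment> \<open>\<open>T\<^sup>2 z = - z\<close> puts the second reflection point at \<open>x - z\<close>, and the second reflection
    identifies it as \<open>symp_support_point x\<close>.\<close>
  define b where "b = ob_point X (outer_billiard X z)"
  have "- z = 2 *\<^sub>R b - (2 *\<^sub>R x - z)"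
    using z(2) Tz by (simp add: outer_billiard_def b_def numeral_2_eq_2)
  then have "2 *\<^sub>R b = 2 *\<^sub>R (x - z)"
    by (simp add: algebra_simps) (simp add: scaleR_2 mult_2_right)
  then have b: "b = x - z"
    by simp
  then have "outer_billiard X z - b = x"
    by (simp add: Tz scaleR_2)
  then have "symp_support_point x = x - z"
    using support_point_ob_point(2)[OF Tz_out] b by (simp add: symp_support_point_def b_def)
  \<comment> \<open>The first reflection says that \<open>x\<close> maximises \<open>\<omega>(\<cdot>, x - z)\<close> on \<open>X\<close>.\<close>
  moreover have "cJ (z - x) \<noteq> 0" "support_point (cJ (z - x)) = x"
    using support_point_ob_point[OF z(1)] x_ob by auto
  then have "cJ (z - x) \<bullet> y \<le> cJ (z - x) \<bullet> x"
    using support_point(2) y by metis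
  ultimately show "omega y (symp_support_point x) \<le> symp_support x"
    unfolding symp_support_def
    by (metis omega_def omega_antisym minus_diff_eq omega_minus_left neg_le_iff_le)
qed

end

lemma zero_interior_if_centrally_symmetric:
  fixes X :: "'a::euclidean_space set"
  assumes "convex X" "centrally_symmetric X" "interior X \<noteq> {}"
  shows "0 \<in> interior X"
proof -
  obtain p where p: "p \<in> interior X"
    using assms(3) by blast
  have "uminus ` X = X"
    using assms(2) unfolding centrally_symmetric_def by force
  then have "- p \<in> interior X"
    using p interior_negations[of X] by auto
  from convexD[OF convex_interior[OF assms(1)] p this, of "1/2" "1/2"] show ?thesis
    by simp
qed

lemma C1_boundary_if_C2_boundary:
  fixes X :: "'a::euclidean_space set"
  assumes "C2_boundary X"
  shows "\<forall>p\<in>frontier X. \<exists>U (f::'a \<Rightarrow> real) g. open U \<and> p \<in> U \<and>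
    (\<forall>x\<in>U. (f has_derivative (\<lambda>h. g x \<bullet> h)) (at x)) \<and> g p \<noteq> 0 \<and> X \<inter> U = {x\<in>U. f x \<le> 0}"
proof
  fix p assume "p \<in> frontier X"
  obtain U f g g' where "open U" "p \<in> U" "\<forall>x\<in>U. (f has_derivative (\<lambda>h. g x \<bullet> h)) (at x)"
      "\<forall>x\<in>U. (g has_derivative g' x) (at x)" "\<forall>h. continuous_on U (\<lambda>x. g' x h)"
      "g p \<noteq> 0" "X \<inter> U = {x\<in>U. f x \<le> (0::real)}"
    using bspec[OF assms[unfolded C2_boundary_def] \<open>p \<in> frontier X\<close>] by (elim exE conjE) blast
  then show "\<exists>U (f::'a \<Rightarrow> real) g. open U \<and> p \<in> U \<and>
      (\<forall>x\<in>U. (f has_derivative (\<lambda>h. g x \<bullet> h)) (at x)) \<and> g p \<noteq> 0 \<and> X \<inter> U = {x\<in>U. f x \<le> 0}"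
    by (intro exI conjI)
qed

lemma billiard_table_if_smooth_symmetric_body:
  fixes X :: "(complex ^ 'n) set"
  assumes "convex_body X" and "centrally_symmetric X" and "strictly_convex X" and "C2_boundary X"
  shows "billiard_table X"
proof unfold_locales
  show "compact X" "convex X"
    using assms(1) unfolding convex_body_def by auto
  show "0 \<in> interior X"
    using assms(1,2) zero_interior_if_centrally_symmetric unfolding convex_body_def by blast
qed (use assms(3) C1_boundary_if_C2_boundary[OF assms(4)] in auto)

theorem theorem3p2:
  fixes X :: "(complex ^ 'n) set"
  assumes "convex_body X" and "centrally_symmetric X" and "strictly_convex X"
    and "C2_boundary X"
    and "\<forall>x\<in>frontier X. \<exists>z. z \<notin> X \<and>
            (outer_billiard X ^^ 4) z = z \<and> (outer_billiard X ^^ 2) z = - z \<and>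
            x = (1/2) *\<^sub>R (z + outer_billiard X z)"
  shows "\<exists>\<alpha>>0. X = (\<lambda>y. \<alpha> *\<^sub>R y) ` symp_polar X \<and>
           symp_self_polar ((\<lambda>y. (1 / sqrt \<alpha>) *\<^sub>R y) ` X)"
proof -
  interpret billiard_table X
    using billiard_table_if_smooth_symmetric_body assms(1-4) .
  have "reciprocal"
    using assms(5) by (intro reciprocal_if_symmetric_orbits) blast
  obtain x0 where x0: "x0 \<in> frontier X"
    using radial_proj_frontier[of 1] by auto
  define \<alpha> where "\<alpha> = symp_support x0"
  have "\<alpha> > 0"
    using symp_support_pos frontier_nonzero x0 by (simp add: \<alpha>_def)
  moreover have "\<And>x. x \<in> frontier X \<Longrightarrow> symp_support x = \<alpha>"
    using symp_support_eq_frontier[OF \<open>reciprocal\<close> _ x0] by (simp add: \<alpha>_def)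
  ultimately have "X = (\<lambda>y. \<alpha> *\<^sub>R y) ` symp_polar X"
    using subset_scaleR_symp_polar scaleR_symp_polar_subset[OF assms(2)] by (simp add: set_eq_subset)
  then show ?thesis
    using symp_self_polar_rescaled \<open>\<alpha> > 0\<close> by blast
qed
end
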